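(* Let $G$ be a finite simple graph containing at least one critical vertex. Let $a \geq 1$ and let $r_1, \ldots, r_a$ be positive integers with $1 + \sum_{i=1}^a r_i = \chi(G)$. Among all $(r_1, \ldots, r_a)$-partitioned colorings of $G$, choose one, $\pi = \{\{x\}, L_{11}, \ldots, L_{1r_1}, \ldots, L_{a1}, \ldots, L_{ar_a}\}$, minimizing \[\sum_{i=1}^a \left\| G\Big[\bigcup_{j=1}^{r_i} L_{ij}\Big] \right\|,\] and put $U_i = \bigcup_{j=1}^{r_i} L_{ij}$. Suppose $x$ is low. If $i \neq j$ are indices with $r_i \geq r_j \geq 3$ and some low vertex $w \in U_i \cap N(x)$ is adjacent to some low vertex $z \in U_j \cap N(x)$, then every low vertex in $(U_i \cup U_j) \cap N(x)$ is adjacent to all other vertices of $G[(U_i \cup U_j) \cap N(x)]$ (i.e. is universal in that induced subgraph).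
   Context: A vertex $v$ of $G$ is critical if $\chi(G - v) < \chi(G)$. A vertex $v$ is low if $d(v) = \chi(G) - 1$ and high otherwise. $N(x)$ is the neighborhood of $x$, and $\|H\|$ the number of edges of a graph $H$. Given $a \geq 1$ and $r_1, \ldots, r_a$ with $1 + \sum_i r_i = \chi(G)$, an $(r_1, \ldots, r_a)$-partitioned coloring of $G$ is a proper coloring of $G$ with exactly $\chi(G)$ color classes, written in the form $\{\{x\}, L_{11}, \ldots, L_{1r_1}, \ldots, L_{a1}, \ldots, L_{ar_a}\}$, where $\{x\}$ is a singleton color class and each $L_{ij}$ is a color class. *)

theory Defs
  imports Main
begin

definition simple_graph :: "'a set \<Rightarrow> ('a \<Rightarrow> 'a \<Rightarrow> bool) \<Rightarrow> bool" where
  "simple_graph V E \<longleftrightarrow> finite V \<and> (\<forall>u v. E u v \<longrightarrow> u \<in> V \<and> v \<in> V \<and> u \<noteq> v \<and> E v u)"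

definition proper_coloring :: "'a set \<Rightarrow> ('a \<Rightarrow> 'a \<Rightarrow> bool) \<Rightarrow> nat \<Rightarrow> ('a \<Rightarrow> nat) \<Rightarrow> bool" where
  "proper_coloring V E k c \<longleftrightarrow> (\<forall>v\<in>V. c v < k) \<and> (\<forall>u\<in>V. \<forall>v\<in>V. E u v \<longrightarrow> c u \<noteq> c v)"

definition colorable :: "'a set \<Rightarrow> ('a \<Rightarrow> 'a \<Rightarrow> bool) \<Rightarrow> nat \<Rightarrow> bool" where
  "colorable V E k \<longleftrightarrow> (\<exists>c. proper_coloring V E k c)"

definition chi :: "'a set \<Rightarrow> ('a \<Rightarrow> 'a \<Rightarrow> bool) \<Rightarrow> nat" where
  "chi V E = (LEAST k. colorable V E k)"

definition critical :: "'a set \<Rightarrow> ('a \<Rightarrow> 'a \<Rightarrow> bool) \<Rightarrow> 'a \<Rightarrow> bool" where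
  "critical V E v \<longleftrightarrow> v \<in> V \<and> chi (V - {v}) (\<lambda>x y. E x y \<and> x \<noteq> v \<and> y \<noteq> v) < chi V E"

definition nbhd :: "'a set \<Rightarrow> ('a \<Rightarrow> 'a \<Rightarrow> bool) \<Rightarrow> 'a \<Rightarrow> 'a set" where
  "nbhd V E x = {u \<in> V. E x u}"

definition degree :: "'a set \<Rightarrow> ('a \<Rightarrow> 'a \<Rightarrow> bool) \<Rightarrow> 'a \<Rightarrow> nat" where
  "degree V E v = card (nbhd V E v)"

definition low :: "'a set \<Rightarrow> ('a \<Rightarrow> 'a \<Rightarrow> bool) \<Rightarrow> 'a \<Rightarrow> bool" where
  "low V E v \<longleftrightarrow> degree V E v = chi V E - 1"

definition edges_in :: "('a \<Rightarrow> 'a \<Rightarrow> bool) \<Rightarrow> 'a set \<Rightarrow> nat" where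
  "edges_in E U = card {{u, v} | u v. u \<in> U \<and> v \<in> U \<and> E u v}"

definition independent :: "('a \<Rightarrow> 'a \<Rightarrow> bool) \<Rightarrow> 'a set \<Rightarrow> bool" where
  "independent E S \<longleftrightarrow> (\<forall>u\<in>S. \<forall>v\<in>S. \<not> E u v)"

definition partitioned_coloring ::
  "'a set \<Rightarrow> ('a \<Rightarrow> 'a \<Rightarrow> bool) \<Rightarrow> nat \<Rightarrow> (nat \<Rightarrow> nat) \<Rightarrow> 'a \<Rightarrow> (nat \<Rightarrow> nat \<Rightarrow> 'a set) \<Rightarrow> bool" where
  "partitioned_coloring V E a r x L \<longleftrightarrow>
     a \<ge> 1 \<and> 1 + (\<Sum>i=1..a. r i) = chi V E \<and> x \<in> V \<and>
     (\<forall>i\<in>{1..a}. \<forall>j\<in>{1..r i}. L i j \<noteq> {} \<and> independent E (L i j) \<and> x \<notin> L i j) \<and>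
     (\<forall>i\<in>{1..a}. \<forall>j\<in>{1..r i}. \<forall>i'\<in>{1..a}. \<forall>j'\<in>{1..r i'}.
        (i, j) \<noteq> (i', j') \<longrightarrow> L i j \<inter> L i' j' = {}) \<and>
     V = insert x (\<Union>i\<in>{1..a}. \<Union>j\<in>{1..r i}. L i j)"

definition partU :: "(nat \<Rightarrow> nat) \<Rightarrow> (nat \<Rightarrow> nat \<Rightarrow> 'a set) \<Rightarrow> nat \<Rightarrow> 'a set" where
  "partU r L i = (\<Union>j\<in>{1..r i}. L i j)"

definition pc_cost :: "('a \<Rightarrow> 'a \<Rightarrow> bool) \<Rightarrow> nat \<Rightarrow> (nat \<Rightarrow> nat) \<Rightarrow> (nat \<Rightarrow> nat \<Rightarrow> 'a set) \<Rightarrow> nat" where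
  "pc_cost E a r L = (\<Sum>i=1..a. edges_in E (partU r L i))"

end

theory Submission
  imports Defs
begin

text \<open>Encode a partitioned colouring by its singleton \<open>s\<close> and a colouring of \<open>V - {s}\<close> by the
  \<open>\<chi>(G) - 1\<close> class indices; then \<open>s\<close> sees every class. Suppose \<open>s\<close> sees each class of part \<open>p\<close>
  exactly once, as a low singleton does. Swapping \<open>s\<close> with one of these neighbours \<open>u\<close> changes
  the cost by the number of neighbours of \<open>u\<close> in part \<open>p\<close> minus \<open>r p - 1\<close>, so by minimality \<open>u\<close> is
  again a singleton seeing each class of part \<open>p\<close> once. Moving the singleton along the component
  of \<open>s\<close> in \<open>G[{s} \<union> U\<^sub>p]\<close> shows that all its vertices have exactly \<open>r p\<close> neighbours there. This
  degree bound controls the two-coloured Kempe chains through the neighbours of \<open>s\<close>: the chain joining the neighbours of classes \<open>j\<close> and \<open>j'\<close> is an induced path, and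
  chains of different class pairs from one neighbour meet only there. For \<open>r p \<ge> 3\<close> a Kempe swap
  with a third class then forces the neighbours of \<open>s\<close> in \<open>U\<^sub>p\<close> to be pairwise adjacent. Adjacency
  across two parts follows by moving the singleton from \<open>x\<close> to the low vertex \<open>w\<close> and then to \<open>z\<close>.\<close>

definition rel_path :: "('a \<Rightarrow> 'a \<Rightarrow> bool) \<Rightarrow> 'a list \<Rightarrow> bool" where
  "rel_path R xs \<longleftrightarrow> xs \<noteq> [] \<and> distinct xs \<and> (\<forall>i. Suc i < length xs \<longrightarrow> R (xs!i) (xs!Suc i))"

lemma rtranclp_imp_rel_path:
  assumes "R\<^sup>*\<^sup>* a b"
  obtains xs where "rel_path R xs" "xs!0 = a" "last xs = b"
proof -
  from assms have "\<exists>xs. rel_path R xs \<and> xs!0 = a \<and> last xs = b"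
  proof (induction rule: rtranclp_induct)
    case base
    show ?case by (rule exI[of _ "[a]"]) (auto simp: rel_path_def)
  next
    case (step b c)
    then obtain xs where xs: "rel_path R xs" "xs!0 = a" "last xs = b" by blast
    have ne: "xs \<noteq> []" using xs(1) unfolding rel_path_def by auto
    show ?case
    proof (cases "c \<in> set xs")
      case True
      then obtain k where k: "k < length xs" "xs!k = c" by (auto simp: in_set_conv_nth)
      have "rel_path R (take (Suc k) xs)" using xs(1) k unfolding rel_path_def by auto
      moreover have "take (Suc k) xs ! 0 = a" using xs(2) by simp
      moreover have "last (take (Suc k) xs) = c" using k by (simp add: take_Suc_conv_app_nth)
      ultimately show ?thesis by blast
    next
      case False
      have "rel_path R (xs @ [c])"
        unfolding rel_path_def
      proof (intro conjI allI impI)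
        show "distinct (xs @ [c])" using xs(1) False unfolding rel_path_def by auto
        fix i assume i: "Suc i < length (xs @ [c])"
        show "R ((xs @ [c])!i) ((xs @ [c])!Suc i)"
        proof (cases "Suc i < length xs")
          case True
          then show ?thesis using xs(1) unfolding rel_path_def by (simp add: nth_append)
        next
          case False
          then have "i = length xs - 1" "Suc i = length xs" using i by auto
          then show ?thesis using step(2) xs(3) ne by (simp add: nth_append last_conv_nth)
        qed
      qed simp
      then show ?thesis using xs(2) ne by (intro exI[of _ "xs @ [c]"]) (simp add: nth_append)
    qed
  qed
  then show ?thesis using that by blast
qed

lemma rel_path_rtranclp:
  assumes "rel_path R P" "i < length P"
  shows "R\<^sup>*\<^sup>* (P!0) (P!i)"
  using assms(2)
proof (induction i)
  case (Suc i)
  then have "R (P!i) (P!Suc i)" using assms(1) unfolding rel_path_def by auto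
  then show ?case using Suc by (meson Suc_lessD rtranclp.rtrancl_into_rtrancl)
qed simp

definition only_path_nbrs :: "('a \<Rightarrow> 'a \<Rightarrow> bool) \<Rightarrow> 'a list \<Rightarrow> nat \<Rightarrow> bool" where
  "only_path_nbrs R P l \<longleftrightarrow>
     (\<forall>w. R (P!l) w \<longrightarrow> (0 < l \<and> w = P!(l-1)) \<or> (Suc l < length P \<and> w = P!Suc l))"

lemma rtranclp_stays_in_path_prefix:
  assumes P: "rel_path R P" and m: "0 < m" "m \<le> length P"
    and nbrs: "\<forall>l<m. only_path_nbrs R P l"
    and R': "\<And>u v. R' u v \<Longrightarrow> R u v \<and> (m < length P \<longrightarrow> v \<noteq> P!m)"
    and reach: "R'\<^sup>*\<^sup>* (P!0) v"
  shows "v \<in> set (take m P)"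
  using reach
proof (induction rule: rtranclp_induct)
  case base
  then show ?case using m P unfolding rel_path_def by (simp add: in_set_conv_nth) (metis nth_take)
next
  case (step v u)
  then obtain l where l: "l < m" "l < length P" "P!l = v" by (auto simp: in_set_conv_nth)
  have Ru: "R (P!l) u" "m < length P \<longrightarrow> u \<noteq> P!m" using R' step(2) l by auto
  with nbrs l(1) have "(0 < l \<and> u = P!(l-1)) \<or> (Suc l < length P \<and> u = P!Suc l)"
    unfolding only_path_nbrs_def by blast
  then show ?case
  proof
    assume "0 < l \<and> u = P!(l-1)"
    then show ?thesis using l by (auto simp: in_set_conv_nth intro!: exI[of _ "l-1"])
  next
    assume u: "Suc l < length P \<and> u = P!Suc l"
    with Ru(2) have "Suc l < m" using l(1) by (cases "Suc l = m") auto
    then show ?thesis using u by (auto simp: in_set_conv_nth intro!: exI[of _ "Suc l"])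
  qed
qed

lemma edges_in_insert:
  assumes fin: "finite A" and sA: "s \<notin> A" and irr: "\<And>u. \<not> E u u" and sym: "\<And>u v. E u v \<Longrightarrow> E v u"
  shows "edges_in E (insert s A) = edges_in E A + card {w\<in>A. E s w}"
proof -
  define ES where "ES U = {{u, v} |u v. u \<in> U \<and> v \<in> U \<and> E u v}" for U
  have split: "ES (insert s A) = ES A \<union> (\<lambda>w. {s,w}) ` {w\<in>A. E s w}"
  proof
    show "ES (insert s A) \<subseteq> ES A \<union> (\<lambda>w. {s,w}) ` {w\<in>A. E s w}"
    proof
      fix e assume "e \<in> ES (insert s A)"
      then obtain u v where e: "e = {u,v}" "u \<in> insert s A" "v \<in> insert s A" "E u v"
        unfolding ES_def by blast
      then consider "u = s" "v \<in> A" | "v = s" "u \<in> A" | "u \<in> A" "v \<in> A" using irr by blast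
      then show "e \<in> ES A \<union> (\<lambda>w. {s,w}) ` {w\<in>A. E s w}"
        by cases (use e sym in \<open>auto simp: ES_def insert_commute\<close>)
    qed
  qed (auto simp: ES_def)
  have "finite (ES A)" by (rule finite_subset[of _ "Pow A"]) (use fin in \<open>auto simp: ES_def\<close>)
  moreover have "ES A \<inter> (\<lambda>w. {s,w}) ` {w\<in>A. E s w} = {}"
    using sA unfolding ES_def by (auto simp: doubleton_eq_iff)
  moreover have "inj_on (\<lambda>w. {s,w}) {w\<in>A. E s w}"
    unfolding inj_on_def using sA by (auto simp: doubleton_eq_iff)
  ultimately have "card (ES (insert s A)) = card (ES A) + card {w\<in>A. E s w}"
    unfolding split using fin by (simp add: card_Un_disjoint card_image)
  then show ?thesis unfolding edges_in_def ES_def .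
qed

section \<open>Partitioned colourings with a given singleton\<close>

locale chi_partition =
  fixes V :: "'a set" and E :: "'a \<Rightarrow> 'a \<Rightarrow> bool" and a :: nat and r :: "nat \<Rightarrow> nat"
  assumes graph: "simple_graph V E"
    and a_ge_1: "a \<ge> 1"
    and chi_eq: "1 + (\<Sum>k=1..a. r k) = chi V E"
begin

definition classes :: "(nat \<times> nat) set" where
  "classes = Sigma {1..a} (\<lambda>i. {1..r i})"

lemma finite_classes: "finite classes"
  unfolding classes_def by auto

lemma chi_eq_card_classes: "chi V E = card classes + 1"
  using chi_eq unfolding classes_def by (subst card_SigmaI) auto

lemma classesD: "q \<in> classes \<Longrightarrow> fst q = i \<Longrightarrow> q = (i, snd q) \<and> snd q \<in> {1..r i} \<and> i \<in> {1..a}"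
  unfolding classes_def by auto

lemma finite_V: "finite V"
  using graph unfolding simple_graph_def by auto

lemma E_sym: "E u v \<Longrightarrow> E v u"
  using graph unfolding simple_graph_def by auto

lemma E_V: "E u v \<Longrightarrow> u \<in> V \<and> v \<in> V \<and> u \<noteq> v"
  using graph unfolding simple_graph_def by auto

lemma E_irrefl: "\<not> E u u"
  using E_V by blast

lemma no_proper_coloring_by_classes:
  assumes "\<forall>v\<in>V. c v \<in> classes" "\<forall>u\<in>V. \<forall>v\<in>V. E u v \<longrightarrow> c u \<noteq> c v"
  shows False
proof -
  obtain f where f: "bij_betw f classes {0..<card classes}"
    using ex_bij_betw_finite_nat[OF finite_classes] by blast
  have "proper_coloring V E (card classes) (f \<circ> c)"
    unfolding proper_coloring_def
  proof (intro conjI ballI impI)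
    fix v assume "v \<in> V" then show "(f \<circ> c) v < card classes"
      using assms(1) f by (auto simp: bij_betw_def)
  next
    fix u v assume "u \<in> V" "v \<in> V" "E u v"
    then have "c u \<noteq> c v" "c u \<in> classes" "c v \<in> classes" using assms by auto
    then show "(f \<circ> c) u \<noteq> (f \<circ> c) v"
      using f unfolding bij_betw_def inj_on_def by auto
  qed
  then have "chi V E \<le> card classes"
    unfolding chi_def colorable_def by (blast intro: Least_le)
  then show False using chi_eq_card_classes by simp
qed

text \<open>The partitioned colouring with singleton \<open>s\<close> and classes \<open>{v. c v = (i, j)}\<close>; the value of
  \<open>c\<close> at \<open>s\<close> is irrelevant.\<close>
definition sing_coloring :: "'a \<Rightarrow> ('a \<Rightarrow> nat \<times> nat) \<Rightarrow> bool" where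
  "sing_coloring s c \<longleftrightarrow> s \<in> V \<and> (\<forall>v\<in>V-{s}. c v \<in> classes) \<and>
     (\<forall>u\<in>V-{s}. \<forall>v\<in>V-{s}. E u v \<longrightarrow> c u \<noteq> c v)"

lemma sing_coloring_classes: "sing_coloring s c \<Longrightarrow> v \<in> V - {s} \<Longrightarrow> c v \<in> classes"
  unfolding sing_coloring_def by auto

lemma sing_coloring_proper:
  "sing_coloring s c \<Longrightarrow> u \<in> V - {s} \<Longrightarrow> v \<in> V - {s} \<Longrightarrow> E u v \<Longrightarrow> c u \<noteq> c v"
  unfolding sing_coloring_def by auto

text \<open>Otherwise \<open>s\<close> could join class \<open>q\<close>, giving a colouring with \<open>\<chi> - 1\<close> colours.\<close>
lemma sing_sees_every_class:
  assumes "sing_coloring s c" "q \<in> classes"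
  shows "\<exists>v\<in>V-{s}. E s v \<and> c v = q"
proof (rule ccontr)
  assume none: "\<not> ?thesis"
  show False
  proof (rule no_proper_coloring_by_classes[of "c(s := q)"])
    show "\<forall>v\<in>V. (c(s := q)) v \<in> classes" using assms unfolding sing_coloring_def by auto
    show "\<forall>u\<in>V. \<forall>v\<in>V. E u v \<longrightarrow> (c(s := q)) u \<noteq> (c(s := q)) v"
    proof (intro ballI impI)
      fix u v assume uv: "u \<in> V" "v \<in> V" "E u v"
      then consider "u = s" | "v = s" | "u \<in> V - {s}" "v \<in> V - {s}" by blast
      then show "(c(s := q)) u \<noteq> (c(s := q)) v"
        by cases (use none uv E_V E_sym sing_coloring_proper[OF assms(1)] in fastforce)+
    qed
  qed
qed

definition part :: "'a \<Rightarrow> ('a \<Rightarrow> nat \<times> nat) \<Rightarrow> nat \<Rightarrow> 'a set" where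
  "part s c i = {v\<in>V-{s}. fst (c v) = i}"

definition cost :: "'a \<Rightarrow> ('a \<Rightarrow> nat \<times> nat) \<Rightarrow> nat" where
  "cost s c = (\<Sum>i=1..a. edges_in E (part s c i))"

lemma finite_part: "finite (part s c i)"
  using finite_V unfolding part_def by auto

definition class_sets :: "'a \<Rightarrow> ('a \<Rightarrow> nat \<times> nat) \<Rightarrow> nat \<Rightarrow> nat \<Rightarrow> 'a set" where
  "class_sets s c i j = {v \<in> V - {s}. c v = (i, j)}"

lemma partitioned_coloring_class_sets:
  assumes st: "sing_coloring s c"
  shows "partitioned_coloring V E a r s (class_sets s c)"
  unfolding partitioned_coloring_def
proof (intro conjI ballI)
  show "1 \<le> a" "1 + sum r {1..a} = chi V E" by (fact a_ge_1 chi_eq)+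
  show "s \<in> V" using st unfolding sing_coloring_def by auto
  fix i j assume ij: "i \<in> {1..a}" "j \<in> {1..r i}"
  then have "(i, j) \<in> classes" unfolding classes_def by auto
  then show "class_sets s c i j \<noteq> {}"
    using sing_sees_every_class[OF st] unfolding class_sets_def by fastforce
  show "independent E (class_sets s c i j)"
    unfolding independent_def
  proof (intro ballI notI)
    fix u v assume "u \<in> class_sets s c i j" "v \<in> class_sets s c i j" "E u v"
    then show False using sing_coloring_proper[OF st, of u v] unfolding class_sets_def by auto
  qed
  show "s \<notin> class_sets s c i j" unfolding class_sets_def by auto
next
  show "V = insert s (\<Union>i\<in>{1..a}. \<Union>j\<in>{1..r i}. class_sets s c i j)"
    using st unfolding sing_coloring_def class_sets_def classes_def by fastforce
qed (auto simp: class_sets_def)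

lemma pc_cost_class_sets:
  assumes st: "sing_coloring s c"
  shows "pc_cost E a r (class_sets s c) = cost s c"
proof -
  have "partU r (class_sets s c) i = part s c i" if "i \<in> {1..a}" for i
    using sing_coloring_classes[OF st] classesD
    unfolding partU_def class_sets_def part_def by fastforce
  then show ?thesis unfolding pc_cost_def cost_def by simp
qed

definition class_of :: "(nat \<Rightarrow> nat \<Rightarrow> 'a set) \<Rightarrow> 'a \<Rightarrow> nat \<times> nat" where
  "class_of L v = (SOME q. q \<in> classes \<and> v \<in> L (fst q) (snd q))"

lemma partitioned_coloringD:
  assumes pc: "partitioned_coloring V E a r x L"
  shows "x \<in> V"
    and "q \<in> classes \<Longrightarrow> independent E (L (fst q) (snd q)) \<and> x \<notin> L (fst q) (snd q)"
    and "q \<in> classes \<Longrightarrow> q' \<in> classes \<Longrightarrow> q \<noteq> q' \<Longrightarrow>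
           L (fst q) (snd q) \<inter> L (fst q') (snd q') = {}"
    and "V = insert x (\<Union>q\<in>classes. L (fst q) (snd q))"
proof -
  have x: "x \<in> V"
    and cls: "\<forall>i\<in>{1..a}. \<forall>j\<in>{1..r i}. L i j \<noteq> {} \<and> independent E (L i j) \<and> x \<notin> L i j"
    and disj: "\<forall>i\<in>{1..a}. \<forall>j\<in>{1..r i}. \<forall>i'\<in>{1..a}. \<forall>j'\<in>{1..r i'}.
                 (i, j) \<noteq> (i', j') \<longrightarrow> L i j \<inter> L i' j' = {}"
    and cover: "V = insert x (\<Union>i\<in>{1..a}. \<Union>j\<in>{1..r i}. L i j)"
    using pc unfolding partitioned_coloring_def by blast+
  show "x \<in> V" by (fact x)
  show "q \<in> classes \<Longrightarrow> independent E (L (fst q) (snd q)) \<and> x \<notin> L (fst q) (snd q)"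
    using cls unfolding classes_def by (cases q) simp
  show "q \<in> classes \<Longrightarrow> q' \<in> classes \<Longrightarrow> q \<noteq> q' \<Longrightarrow>
      L (fst q) (snd q) \<inter> L (fst q') (snd q') = {}"
    using disj unfolding classes_def by (cases q, cases q') simp
  have "(\<Union>q\<in>classes. L (fst q) (snd q)) = (\<Union>i\<in>{1..a}. \<Union>j\<in>{1..r i}. L i j)"
    unfolding classes_def by fastforce
  then show "V = insert x (\<Union>q\<in>classes. L (fst q) (snd q))" using cover by simp
qed

lemma class_of:
  assumes pc: "partitioned_coloring V E a r x L" and v: "v \<in> V - {x}"
  shows "class_of L v \<in> classes" "v \<in> L (fst (class_of L v)) (snd (class_of L v))"
    and "\<And>q. q \<in> classes \<Longrightarrow> v \<in> L (fst q) (snd q) \<Longrightarrow> class_of L v = q"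
proof -
  obtain q0 where q0: "q0 \<in> classes" "v \<in> L (fst q0) (snd q0)"
    using partitioned_coloringD(4)[OF pc] v by blast
  show some: "class_of L v \<in> classes" "v \<in> L (fst (class_of L v)) (snd (class_of L v))"
    unfolding class_of_def by (rule someI2[of _ q0], use q0 in auto)+
  fix q assume "q \<in> classes" "v \<in> L (fst q) (snd q)"
  then show "class_of L v = q" using partitioned_coloringD(3)[OF pc] some by blast
qed

lemma sing_coloring_class_of:
  assumes pc: "partitioned_coloring V E a r x L"
  shows "sing_coloring x (class_of L)"
  unfolding sing_coloring_def
proof (intro conjI ballI impI)
  show "x \<in> V" by (rule partitioned_coloringD(1)[OF pc])
  fix v assume "v \<in> V - {x}"
  then show "class_of L v \<in> classes" by (rule class_of(1)[OF pc])
next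
  fix u v assume u: "u \<in> V - {x}" and v: "v \<in> V - {x}" and e: "E u v"
  show "class_of L u \<noteq> class_of L v"
  proof
    assume eq: "class_of L u = class_of L v"
    have "independent E (L (fst (class_of L v)) (snd (class_of L v)))"
      using partitioned_coloringD(2)[OF pc] class_of(1)[OF pc v] by blast
    then show False using class_of(2)[OF pc u] class_of(2)[OF pc v] eq e
      unfolding independent_def by metis
  qed
qed

lemma partU_eq_part:
  assumes pc: "partitioned_coloring V E a r x L" and i: "i \<in> {1..a}"
  shows "partU r L i = part x (class_of L) i"
proof -
  have "v \<in> partU r L i \<longleftrightarrow> v \<in> part x (class_of L) i" for v
  proof
    assume "v \<in> partU r L i"
    then obtain j where j: "j \<in> {1..r i}" "v \<in> L i j" unfolding partU_def by auto
    then have ij: "(i, j) \<in> classes" using i unfolding classes_def by auto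
    then have vV: "v \<in> V - {x}" using partitioned_coloringD(2,4)[OF pc] j(2) by fastforce
    then have "class_of L v = (i, j)" using class_of(3)[OF pc vV ij] j(2) by simp
    then show "v \<in> part x (class_of L) i" using vV unfolding part_def by simp
  next
    assume v: "v \<in> part x (class_of L) i"
    then have vV: "v \<in> V - {x}" and "fst (class_of L v) = i" unfolding part_def by auto
    then obtain j where cj: "class_of L v = (i, j)" by (cases "class_of L v") auto
    then have "j \<in> {1..r i}" using class_of(1)[OF pc vV] unfolding classes_def by auto
    moreover have "v \<in> L i j" using class_of(2)[OF pc vV] cj by simp
    ultimately show "v \<in> partU r L i" unfolding partU_def by blast
  qed
  then show ?thesis by blast
qed

lemma pc_cost_eq_cost:
  assumes pc: "partitioned_coloring V E a r x L"
  shows "pc_cost E a r L = cost x (class_of L)"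
  unfolding pc_cost_def cost_def using partU_eq_part[OF pc] by simp

end

section \<open>Moving the singleton\<close>

context chi_partition
begin

definition sees_part_once :: "'a \<Rightarrow> ('a \<Rightarrow> nat \<times> nat) \<Rightarrow> nat \<Rightarrow> bool" where
  "sees_part_once s c p \<longleftrightarrow> (\<forall>j\<in>{1..r p}. \<exists>!u. u \<in> V - {s} \<and> E s u \<and> c u = (p, j))"

definition part_nbrs :: "'a \<Rightarrow> ('a \<Rightarrow> nat \<times> nat) \<Rightarrow> nat \<Rightarrow> 'a set" where
  "part_nbrs s c p = {u \<in> V - {s}. E s u \<and> fst (c u) = p}"

lemma finite_part_nbrs: "finite (part_nbrs s c p)"
  using finite_V unfolding part_nbrs_def by auto

lemma part_nbrs_class_index:
  assumes "sing_coloring s c" "u \<in> part_nbrs s c p"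
  shows "c u = (p, snd (c u)) \<and> snd (c u) \<in> {1..r p}"
  using classesD[OF sing_coloring_classes[OF assms(1)]] assms(2) unfolding part_nbrs_def by auto

lemma part_nbrs_index_onto:
  assumes st: "sing_coloring s c" and p: "p \<in> {1..a}"
  shows "(\<lambda>u. snd (c u)) ` part_nbrs s c p = {1..r p}"
proof
  show "(\<lambda>u. snd (c u)) ` part_nbrs s c p \<subseteq> {1..r p}"
    using part_nbrs_class_index[OF st] by auto
  show "{1..r p} \<subseteq> (\<lambda>u. snd (c u)) ` part_nbrs s c p"
  proof
    fix j assume "j \<in> {1..r p}"
    then have "(p, j) \<in> classes" using p unfolding classes_def by auto
    then obtain u where "u \<in> V - {s}" "E s u" "c u = (p, j)" using sing_sees_every_class[OF st] by blast
    then show "j \<in> (\<lambda>u. snd (c u)) ` part_nbrs s c p" unfolding part_nbrs_def by force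
  qed
qed

lemma card_part_nbrs:
  assumes st: "sing_coloring s c" and once: "sees_part_once s c p" and p: "p \<in> {1..a}"
  shows "card (part_nbrs s c p) = r p"
proof -
  have "inj_on (\<lambda>u. snd (c u)) (part_nbrs s c p)"
  proof (rule inj_onI)
    fix u v assume u: "u \<in> part_nbrs s c p" and v: "v \<in> part_nbrs s c p" and "snd (c u) = snd (c v)"
    then have "c u = c v" "snd (c u) \<in> {1..r p}"
      using part_nbrs_class_index[OF st] by metis+
    then show "u = v" using once u v part_nbrs_class_index[OF st u] unfolding sees_part_once_def part_nbrs_def
      by (metis (mono_tags, lifting) mem_Collect_eq)
  qed
  then show ?thesis using part_nbrs_index_onto[OF st p] card_image by fastforce
qed

lemma sees_part_once_if_card_le:
  assumes st: "sing_coloring s c" and p: "p \<in> {1..a}" and le: "card (part_nbrs s c p) \<le> r p"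
  shows "sees_part_once s c p"
  unfolding sees_part_once_def
proof
  fix j assume j: "j \<in> {1..r p}"
  let ?f = "\<lambda>u. snd (c u)"
  have onto: "?f ` part_nbrs s c p = {1..r p}" by (rule part_nbrs_index_onto[OF st p])
  have "card (?f ` part_nbrs s c p) \<le> card (part_nbrs s c p)" by (rule card_image_le[OF finite_part_nbrs])
  with le onto have "card (?f ` part_nbrs s c p) = card (part_nbrs s c p)" by simp
  then have inj: "inj_on ?f (part_nbrs s c p)" by (rule eq_card_imp_inj_on[OF finite_part_nbrs])
  from j onto obtain u where u: "u \<in> part_nbrs s c p" "j = snd (c u)" by blast
  show "\<exists>!u. u \<in> V - {s} \<and> E s u \<and> c u = (p, j)"
  proof (rule ex1I[of _ u])
    show "u \<in> V - {s} \<and> E s u \<and> c u = (p, j)"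
      using u part_nbrs_class_index[OF st u(1)] unfolding part_nbrs_def by auto
    fix v assume "v \<in> V - {s} \<and> E s v \<and> c v = (p, j)"
    then have "v \<in> part_nbrs s c p" "?f v = ?f u" using u unfolding part_nbrs_def by auto
    then show "v = u" using inj u(1) by (simp add: inj_on_def)
  qed
qed

lemma low_sees_part_once:
  assumes st: "sing_coloring s c" and low: "low V E s" and p: "p \<in> {1..a}"
  shows "sees_part_once s c p"
proof -
  let ?N = "nbhd V E s"
  have NV: "?N \<subseteq> V - {s}" unfolding nbhd_def using E_irrefl by auto
  have "c ` ?N \<subseteq> classes" using sing_coloring_classes[OF st] NV by blast
  moreover have "classes \<subseteq> c ` ?N"
  proof
    fix q assume "q \<in> classes"
    then obtain v where "v \<in> V - {s}" "E s v" "c v = q" using sing_sees_every_class[OF st] by blast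
    then show "q \<in> c ` ?N" unfolding nbhd_def by force
  qed
  ultimately have "c ` ?N = classes" by (rule subset_antisym)
  moreover have "card ?N = card classes" using low chi_eq_card_classes unfolding low_def degree_def by simp
  moreover have "finite ?N" using finite_V unfolding nbhd_def by auto
  ultimately have inj: "inj_on c ?N" by (simp add: eq_card_imp_inj_on)
  have "inj_on (\<lambda>u. snd (c u)) (part_nbrs s c p)"
  proof (rule inj_onI)
    fix u v assume u: "u \<in> part_nbrs s c p" and v: "v \<in> part_nbrs s c p" and "snd (c u) = snd (c v)"
    then have "c u = c v" using part_nbrs_class_index[OF st u] part_nbrs_class_index[OF st v] by simp
    moreover have "u \<in> ?N" "v \<in> ?N" using u v unfolding part_nbrs_def nbhd_def by auto
    ultimately show "u = v" using inj by (simp add: inj_on_def)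
  qed
  then have "card (part_nbrs s c p) = r p" using part_nbrs_index_onto[OF st p] card_image by fastforce
  then show ?thesis using sees_part_once_if_card_le[OF st p] by simp
qed

lemma sing_coloring_swap:
  assumes st: "sing_coloring s c" and u: "u \<in> V - {s}" "E s u"
    and uniq: "\<And>w. w \<in> V - {s} \<Longrightarrow> E s w \<Longrightarrow> c w = c u \<Longrightarrow> w = u"
  shows "sing_coloring u (c(s := c u))"
  unfolding sing_coloring_def
proof (intro conjI ballI impI)
  show "u \<in> V" using u by auto
  fix v assume "v \<in> V - {u}"
  then show "(c(s := c u)) v \<in> classes"
    using sing_coloring_classes[OF st] u by (cases "v = s") auto
next
  fix v w assume v: "v \<in> V - {u}" and w: "w \<in> V - {u}" and e: "E v w"
  then consider "v = s" | "w = s" | "v \<in> V - {s}" "w \<in> V - {s}" "v \<noteq> s" "w \<noteq> s" by blast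
  then show "(c(s := c u)) v \<noteq> (c(s := c u)) w"
  proof cases
    case 1
    then have "w \<noteq> s" using e E_irrefl by auto
    then show ?thesis using 1 uniq[of w] e w by auto
  next
    case 2
    then have "v \<noteq> s" using e E_irrefl by auto
    then show ?thesis using 2 uniq[of v] E_sym[OF e] v by auto
  next
    case 3
    then show ?thesis using sing_coloring_proper[OF st] e by simp
  qed
qed

lemma part_swap:
  assumes "sing_coloring s c" "u \<in> V - {s}" "fst (c u) = p"
  shows "part u (c(s := c u)) q = (if q = p then insert s (part s c p - {u}) else part s c q)"
  using assms unfolding part_def sing_coloring_def by auto

lemma cost_swap:
  assumes st: "sing_coloring s c" and once: "sees_part_once s c p" and p: "p \<in> {1..a}"
    and u: "u \<in> part_nbrs s c p"
  shows "cost u (c(s := c u)) + card {w \<in> part s c p - {u}. E u w} = cost s c + (r p - 1)"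
proof -
  let ?c = "c(s := c u)" and ?A = "part s c p - {u}"
  have uV: "u \<in> V - {s}" "fst (c u) = p" using u unfolding part_nbrs_def by auto
  have fin: "finite ?A" using finite_part by auto
  have notin: "u \<notin> ?A" "s \<notin> ?A" unfolding part_def by auto
  have "part s c p = insert u ?A" using uV unfolding part_def by auto
  then have old: "edges_in E (part s c p) = edges_in E ?A + card {w\<in>?A. E u w}"
    by (subst (1) \<open>part s c p = insert u ?A\<close>) (rule edges_in_insert[OF fin notin(1) E_irrefl E_sym])
  have "part u ?c p = insert s ?A" using part_swap[OF st uV] by simp
  then have new: "edges_in E (part u ?c p) = edges_in E ?A + card {w\<in>?A. E s w}"
    by (subst (1) \<open>part u ?c p = insert s ?A\<close>) (rule edges_in_insert[OF fin notin(2) E_irrefl E_sym])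
  have "{w\<in>?A. E s w} = part_nbrs s c p - {u}" unfolding part_def part_nbrs_def by auto
  then have s_edges: "card {w\<in>?A. E s w} = r p - 1"
    using card_part_nbrs[OF st once p] u finite_part_nbrs by (simp add: card_Diff_singleton)
  have others: "(\<Sum>q\<in>{1..a}-{p}. edges_in E (part u ?c q)) = (\<Sum>q\<in>{1..a}-{p}. edges_in E (part s c q))"
    using part_swap[OF st uV] by (intro sum.cong) auto
  show ?thesis
    using old new s_edges others p unfolding cost_def by (simp add: sum.remove)
qed

end

locale min_partition = chi_partition +
  fixes M :: nat
  assumes min_cost: "\<And>s c. sing_coloring s c \<Longrightarrow> M \<le> cost s c"
begin

definition optimal :: "'a \<Rightarrow> ('a \<Rightarrow> nat \<times> nat) \<Rightarrow> bool" where
  "optimal s c \<longleftrightarrow> sing_coloring s c \<and> cost s c = M"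

lemma optimal_sing_coloring: "optimal s c \<Longrightarrow> sing_coloring s c"
  unfolding optimal_def by auto

text \<open>By minimality \<open>u\<close> has at most \<open>r p - 1\<close> neighbours in \<open>part s c p - {u}\<close>; together
  with \<open>s\<close> these are its at most \<open>r p\<close> neighbours in part \<open>p\<close> after the swap.\<close>
lemma optimal_swap:
  assumes opt: "optimal s c" and p: "p \<in> {1..a}" and once: "sees_part_once s c p"
    and u: "u \<in> part_nbrs s c p"
  shows "optimal u (c(s := c u)) \<and> sees_part_once u (c(s := c u)) p"
proof -
  let ?c = "c(s := c u)" and ?B = "{w \<in> part s c p - {u}. E u w}"
  have st: "sing_coloring s c" using opt by (rule optimal_sing_coloring)
  have uV: "u \<in> V - {s}" "E s u" "fst (c u) = p" using u unfolding part_nbrs_def by auto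
  have "w = u" if "w \<in> V - {s}" "E s w" "c w = c u" for w
    using once that uV part_nbrs_class_index[OF st u] unfolding sees_part_once_def by metis
  then have st': "sing_coloring u ?c" using sing_coloring_swap[OF st uV(1,2)] by blast
  have cost_eq: "cost u ?c + card ?B = cost s c + (r p - 1)" by (rule cost_swap[OF st once p u])
  moreover have "M \<le> cost u ?c" by (rule min_cost[OF st'])
  moreover have "cost s c = M" using opt unfolding optimal_def by simp
  ultimately have B_le: "card ?B \<le> r p - 1" by simp
  have "s \<in> V" using st unfolding sing_coloring_def by simp
  then have "part_nbrs u ?c p = insert s ?B"
    using uV E_sym unfolding part_def part_nbrs_def by auto
  moreover have "s \<notin> ?B" unfolding part_def by auto
  moreover have "finite ?B" using finite_part[of s c p] by (rule rev_finite_subset) auto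
  ultimately have card_nbrs: "card (part_nbrs u ?c p) = Suc (card ?B)" by simp
  moreover have "0 < r p"
    using card_part_nbrs[OF st once p] u finite_part_nbrs by (metis card_gt_0_iff empty_iff)
  ultimately have "card (part_nbrs u ?c p) \<le> r p" using B_le by linarith
  then have once': "sees_part_once u ?c p" by (rule sees_part_once_if_card_le[OF st' p])
  then have "card ?B = r p - 1" using card_part_nbrs[OF st' once' p] card_nbrs by simp
  then have "optimal u ?c" using cost_eq opt st' unfolding optimal_def by simp
  with once' show ?thesis by simp
qed

text \<open>Repeated swaps move the singleton anywhere inside the component of \<open>s\<close> in
  \<open>G[{s} \<union> part s c p]\<close> without changing this vertex set.\<close>
lemma optimal_block_degree:
  assumes opt: "optimal s c" and p: "p \<in> {1..a}" and once: "sees_part_once s c p"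
    and reach: "(\<lambda>x y. x \<in> insert s (part s c p) \<and> y \<in> insert s (part s c p) \<and> E x y)\<^sup>*\<^sup>* s v"
  shows "card {w \<in> insert s (part s c p). E v w} = r p"
proof -
  define W where "W = insert s (part s c p)"
  have "\<exists>c'. optimal v c' \<and> sees_part_once v c' p \<and> insert v (part v c' p) = W"
    using reach unfolding W_def[symmetric]
  proof (induction rule: rtranclp_induct)
    case base
    then show ?case using opt once unfolding W_def by auto
  next
    case (step v u)
    then obtain c' where c': "optimal v c'" "sees_part_once v c' p" "insert v (part v c' p) = W"
      by blast
    have st: "sing_coloring v c'" using c'(1) by (rule optimal_sing_coloring)
    have uP: "u \<in> part v c' p" using step(2) c'(3) E_irrefl by auto
    then have uN: "u \<in> part_nbrs v c' p" using step(2) unfolding part_def part_nbrs_def by auto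
    have "insert u (part u (c'(v := c' u)) p) = W"
      using part_swap[OF st, of u p p] uP c'(3) unfolding part_def by auto
    then show ?case using optimal_swap[OF c'(1) p c'(2) uN] by blast
  qed
  then obtain c' where c': "optimal v c'" "sees_part_once v c' p" "insert v (part v c' p) = W" by blast
  have "{w \<in> W. E v w} = part_nbrs v c' p"
    unfolding c'(3)[symmetric] part_nbrs_def part_def using E_irrefl by auto
  then show ?thesis using card_part_nbrs[OF optimal_sing_coloring[OF c'(1)] c'(2) p] unfolding W_def by simp
qed

end

section \<open>Kempe chains inside one part\<close>

locale kempe_part = min_partition +
  fixes s :: 'a and c0 :: "'a \<Rightarrow> nat \<times> nat" and p :: nat
  assumes optimal_c0: "optimal s c0" and p: "p \<in> {1..a}"
    and sees_part_once_c0: "sees_part_once s c0 p" and r_p_ge_3: "3 \<le> r p"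
begin

definition block :: "'a set" where
  "block = insert s (part s c0 p)"

definition block_comp :: "'a set" where
  "block_comp = {v. (\<lambda>x y. x \<in> block \<and> y \<in> block \<and> E x y)\<^sup>*\<^sup>* s v}"

lemma sing_coloring_c0: "sing_coloring s c0"
  using optimal_c0 by (rule optimal_sing_coloring)

lemma s_V: "s \<in> V"
  using sing_coloring_c0 unfolding sing_coloring_def by auto

lemma block_V: "block \<subseteq> V"
  unfolding block_def part_def using s_V by auto

lemma s_block_comp: "s \<in> block_comp"
  unfolding block_comp_def by auto

lemma finite_block: "finite block"
  using block_V finite_V finite_subset by auto

lemma block_comp_degree: "v \<in> block_comp \<Longrightarrow> card {w\<in>block. E v w} = r p"
  unfolding block_comp_def block_def by (rule optimal_block_degree[OF optimal_c0 p sees_part_once_c0]) simp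

definition admissible :: "('a \<Rightarrow> nat \<times> nat) \<Rightarrow> bool" where
  "admissible c \<longleftrightarrow> sing_coloring s c \<and> (\<forall>v\<in>block-{s}. fst (c v) = p) \<and> (\<forall>v\<in>V-block. c v = c0 v)"

lemma admissible_c0: "admissible c0"
  unfolding admissible_def block_def part_def using sing_coloring_c0 by auto

lemma admissible_sing_coloring: "admissible c \<Longrightarrow> sing_coloring s c"
  unfolding admissible_def by auto

lemma admissible_block_iff:
  assumes adm: "admissible c" and v: "v \<in> V - {s}"
  shows "v \<in> block \<longleftrightarrow> fst (c v) = p"
proof
  assume "v \<in> block"
  then show "fst (c v) = p" using adm v unfolding admissible_def by auto
next
  assume cv: "fst (c v) = p"
  show "v \<in> block"
  proof (rule ccontr)
    assume "v \<notin> block"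
    then have "c v = c0 v" using adm v unfolding admissible_def by auto
    then have "v \<in> part s c0 p" using cv v unfolding part_def by auto
    then show False using \<open>v \<notin> block\<close> unfolding block_def by auto
  qed
qed

lemma admissible_in_block: "admissible c \<Longrightarrow> v \<in> V - {s} \<Longrightarrow> c v = (p, j) \<Longrightarrow> v \<in> block"
  using admissible_block_iff by auto

lemma admissible_class_index:
  assumes "admissible c" "v \<in> V - {s}" "c v = (p, j)"
  shows "j \<in> {1..r p}"
  using sing_coloring_classes[OF admissible_sing_coloring[OF assms(1)] assms(2)] assms(3)
  unfolding classes_def by auto

lemma block_comp_step: "u \<in> block_comp \<Longrightarrow> v \<in> block \<Longrightarrow> E u v \<Longrightarrow> v \<in> block_comp"
proof -
  assume u: "u \<in> block_comp" and "v \<in> block" "E u v"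
  moreover have "u \<in> block"
  proof -
    have "(\<lambda>x y. x \<in> block \<and> y \<in> block \<and> E x y)\<^sup>*\<^sup>* s u" using u unfolding block_comp_def by auto
    then show ?thesis by (induction rule: rtranclp_induct) (auto simp: block_def)
  qed
  ultimately show "v \<in> block_comp" unfolding block_comp_def by (auto intro: rtranclp.rtrancl_into_rtrancl)
qed

definition misses_class :: "('a \<Rightarrow> nat \<times> nat) \<Rightarrow> 'a \<Rightarrow> nat \<Rightarrow> bool" where
  "misses_class c u j \<longleftrightarrow> (\<forall>w\<in>V-{s}. E u w \<longrightarrow> c w \<noteq> (p, j))"

lemma block_comp_misses_class:
  assumes adm: "admissible c" and u: "u \<in> block_comp" and J: "J \<subseteq> {1..r p}"
    and A: "A \<subseteq> {w\<in>block. E u w}" and A_cls: "\<forall>w\<in>A. w = s \<or> snd (c w) \<in> J"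
    and crowded: "card J < card A"
  shows "\<exists>j\<in>{1..r p} - J. misses_class c u j"
proof (rule ccontr)
  let ?J' = "{1..r p} - J"
  assume "\<not> ?thesis"
  then obtain g where g: "\<And>j. j \<in> ?J' \<Longrightarrow> g j \<in> V - {s} \<and> E u (g j) \<and> c (g j) = (p, j)"
    unfolding misses_class_def by metis
  have inj: "inj_on g ?J'"
    unfolding inj_on_def using g by (metis snd_conv)
  have g_block: "g ` ?J' \<subseteq> {w\<in>block. E u w}" using g admissible_in_block[OF adm] by auto
  have "A \<inter> g ` ?J' = {}"
  proof (rule ccontr)
    assume "A \<inter> g ` ?J' \<noteq> {}"
    then obtain j where j: "j \<in> ?J'" "g j \<in> A" by blast
    then have "g j \<noteq> s" "snd (c (g j)) = j" using g by auto
    then show False using A_cls j by auto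
  qed
  moreover have fin: "finite {w\<in>block. E u w}" using finite_block by auto
  ultimately have "card A + card (g ` ?J') = card (A \<union> g ` ?J')"
    using A g_block by (metis card_Un_disjoint finite_subset)
  also have "\<dots> \<le> card {w\<in>block. E u w}" using A g_block fin by (intro card_mono) auto
  also have "\<dots> = r p" using block_comp_degree[OF u] .
  finally have "card A + card ?J' \<le> r p" using card_image[OF inj] by simp
  moreover have "card ?J' = r p - card J" using J by (simp add: card_Diff_subset finite_subset)
  moreover have "card J \<le> r p" using J by (metis card_atLeastAtMost card_mono finite_atLeastAtMost diff_Suc_1)
  ultimately show False using crowded by linarith
qed

lemma admissible_sees_part_once:
  assumes adm: "admissible c"
  shows "sees_part_once s c p"
  unfolding sees_part_once_def
proof
  have st: "sing_coloring s c" using adm by (rule admissible_sing_coloring)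
  fix j assume j: "j \<in> {1..r p}"
  then have "(p, j) \<in> classes" using p unfolding classes_def by auto
  then obtain y where y: "y \<in> V - {s}" "E s y" "c y = (p, j)" using sing_sees_every_class[OF st] by blast
  show "\<exists>!y. y \<in> V - {s} \<and> E s y \<and> c y = (p, j)"
  proof (rule ex1I[of _ y])
    show "y \<in> V - {s} \<and> E s y \<and> c y = (p, j)" using y by auto
    fix y' assume y': "y' \<in> V - {s} \<and> E s y' \<and> c y' = (p, j)"
    show "y' = y"
    proof (rule ccontr)
      assume "y' \<noteq> y"
      have "\<exists>j'\<in>{1..r p} - {j}. misses_class c s j'"
      proof (rule block_comp_misses_class[OF adm s_block_comp])
        show "{j} \<subseteq> {1..r p}" using j by simp
        show "{y, y'} \<subseteq> {w\<in>block. E s w}" using y y' admissible_in_block[OF adm] by auto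
        show "\<forall>w\<in>{y, y'}. w = s \<or> snd (c w) \<in> {j}" using y y' by auto
        show "card {j} < card {y, y'}" using \<open>y' \<noteq> y\<close> by simp
      qed
      then obtain j' where "j' \<in> {1..r p}" "misses_class c s j'" by blast
      moreover from \<open>j' \<in> {1..r p}\<close> have "(p, j') \<in> classes" using p unfolding classes_def by auto
      ultimately show False using sing_sees_every_class[OF st] unfolding misses_class_def by blast
    qed
  qed
qed

definition sing_nbr :: "('a \<Rightarrow> nat \<times> nat) \<Rightarrow> nat \<Rightarrow> 'a \<Rightarrow> bool" where
  "sing_nbr c j y \<longleftrightarrow> y \<in> V - {s} \<and> E s y \<and> c y = (p, j)"

lemma sing_nbr_unique:
  assumes adm: "admissible c" and "sing_nbr c j y" "sing_nbr c j y'"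
  shows "y = y'"
proof -
  have "j \<in> {1..r p}" using admissible_class_index[OF adm] assms(2) unfolding sing_nbr_def by blast
  then have "\<exists>!u. u \<in> V - {s} \<and> E s u \<and> c u = (p, j)"
    using admissible_sees_part_once[OF adm] unfolding sees_part_once_def by blast
  then show ?thesis using assms(2,3) unfolding sing_nbr_def by blast
qed

lemma sing_nbr_in_block_comp: "admissible c \<Longrightarrow> sing_nbr c j y \<Longrightarrow> y \<in> block_comp"
  using block_comp_step[OF s_block_comp] admissible_block_iff unfolding sing_nbr_def by auto

lemma sing_nbr_in_block: "admissible c \<Longrightarrow> sing_nbr c j y \<Longrightarrow> y \<in> block - {s}"
  using admissible_in_block unfolding sing_nbr_def by auto

lemma admissible_recolour:
  assumes adm: "admissible c" and u: "u \<in> block - {s}" and j: "j \<in> {1..r p}"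
    and miss: "misses_class c u j"
  shows "admissible (c(u := (p, j)))"
  unfolding admissible_def sing_coloring_def
proof (intro conjI ballI impI)
  show "s \<in> V" by (rule s_V)
  fix v assume "v \<in> V - {s}"
  then show "(c(u := (p, j))) v \<in> classes"
    using sing_coloring_classes[OF admissible_sing_coloring[OF adm]] p j unfolding classes_def by auto
next
  fix v w assume v: "v \<in> V - {s}" and w: "w \<in> V - {s}" and e: "E v w"
  show "(c(u := (p, j))) v \<noteq> (c(u := (p, j))) w"
    using miss v w e E_sym sing_coloring_proper[OF admissible_sing_coloring[OF adm] v w e]
    unfolding misses_class_def by auto
next
  fix v assume "v \<in> block - {s}"
  then show "fst ((c(u := (p, j))) v) = p" using adm unfolding admissible_def by auto
next
  fix v assume "v \<in> V - block"
  then show "(c(u := (p, j))) v = c0 v" using adm u unfolding admissible_def by auto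
qed

end

context kempe_part
begin

definition kempe :: "('a \<Rightarrow> nat \<times> nat) \<Rightarrow> nat \<Rightarrow> nat \<Rightarrow> 'a \<Rightarrow> 'a \<Rightarrow> bool" where
  "kempe c j j' u v \<longleftrightarrow> u \<in> V - {s} \<and> v \<in> V - {s} \<and> c u \<in> {(p, j), (p, j')} \<and> c v \<in> {(p, j), (p, j')} \<and> E u v"

definition kempe_comp :: "('a \<Rightarrow> nat \<times> nat) \<Rightarrow> nat \<Rightarrow> nat \<Rightarrow> 'a \<Rightarrow> 'a set" where
  "kempe_comp c j j' y = {v. (kempe c j j')\<^sup>*\<^sup>* y v}"

definition kempe_swap :: "('a \<Rightarrow> nat \<times> nat) \<Rightarrow> nat \<Rightarrow> nat \<Rightarrow> 'a \<Rightarrow> 'a \<Rightarrow> nat \<times> nat" where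
  "kempe_swap c j j' y v =
     (if v \<in> kempe_comp c j j' y then (if c v = (p, j) then (p, j') else (p, j)) else c v)"

lemma kempe_sym: "kempe c j j' u v \<Longrightarrow> kempe c j j' v u"
  unfolding kempe_def using E_sym by auto

lemma kempe_comm: "kempe c j j' = kempe c j' j"
  unfolding kempe_def by (intro ext) auto

lemma kempe_other_class:
  assumes adm: "admissible c" and k: "kempe c j j' u w" and cu: "c u = (p, j)" and jj': "j \<noteq> j'"
  shows "c w = (p, j')"
  using k cu jj' sing_coloring_proper[OF admissible_sing_coloring[OF adm]] unfolding kempe_def by fastforce

lemma kempe_comp_root: "y \<in> kempe_comp c j j' y"
  unfolding kempe_comp_def by simp

lemma kempe_comp_closed: "x \<in> kempe_comp c j j' y \<Longrightarrow> kempe c j j' x z \<Longrightarrow> z \<in> kempe_comp c j j' y"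
  unfolding kempe_comp_def by (auto intro: rtranclp.rtrancl_into_rtrancl)

lemma kempe_comp_class:
  assumes "v \<in> kempe_comp c j j' y" "y \<in> V - {s}" "c y \<in> {(p, j), (p, j')}"
  shows "v \<in> V - {s} \<and> c v \<in> {(p, j), (p, j')}"
proof -
  have "(kempe c j j')\<^sup>*\<^sup>* y v" using assms(1) unfolding kempe_comp_def by auto
  then show ?thesis using assms(2,3) by (induction rule: rtranclp_induct) (auto simp: kempe_def)
qed

lemma kempe_comp_block_comp:
  assumes adm: "admissible c" and "v \<in> kempe_comp c j j' y" "y \<in> block_comp"
  shows "v \<in> block_comp"
proof -
  have "(kempe c j j')\<^sup>*\<^sup>* y v" using assms(2) unfolding kempe_comp_def by auto
  then show ?thesis using assms(3)
  proof (induction rule: rtranclp_induct)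
    case (step v w)
    then show ?case using block_comp_step admissible_in_block[OF adm] unfolding kempe_def by blast
  qed
qed

lemma kempe_swap_proper:
  assumes adm: "admissible c" and y: "y \<in> V - {s}" "c y \<in> {(p, j), (p, j')}"
    and u: "u \<in> V - {s}" and v: "v \<in> V - {s}" and e: "E u v"
  shows "kempe_swap c j j' y u \<noteq> kempe_swap c j j' y v"
proof -
  let ?K = "kempe_comp c j j' y"
  have K: "w \<in> V - {s} \<and> c w \<in> {(p, j), (p, j')}" if "w \<in> ?K" for w
    using kempe_comp_class[of w c j j' y] that y by blast
  have ne: "c u \<noteq> c v" by (rule sing_coloring_proper[OF admissible_sing_coloring[OF adm] u v e])
  consider "u \<in> ?K" "v \<in> ?K" | "u \<in> ?K" "v \<notin> ?K" | "u \<notin> ?K" "v \<in> ?K" | "u \<notin> ?K" "v \<notin> ?K"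
    by blast
  then show ?thesis
  proof cases
    case 1
    then show ?thesis using K[of u] K[of v] ne unfolding kempe_swap_def by auto
  next
    case 2
    then have "c v \<notin> {(p, j), (p, j')}"
      using kempe_comp_closed[of u c j j' y v] K u v e unfolding kempe_def by auto
    then show ?thesis using 2 unfolding kempe_swap_def by auto
  next
    case 3
    then have "c u \<notin> {(p, j), (p, j')}"
      using kempe_comp_closed[of v c j j' y u] K u v E_sym[OF e] unfolding kempe_def by auto
    then show ?thesis using 3 unfolding kempe_swap_def by auto
  next
    case 4
    then show ?thesis using ne unfolding kempe_swap_def by auto
  qed
qed

lemma admissible_kempe_swap:
  assumes adm: "admissible c" and j: "j \<in> {1..r p}" "j' \<in> {1..r p}"
    and y: "y \<in> V - {s}" "c y \<in> {(p, j), (p, j')}"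
  shows "admissible (kempe_swap c j j' y)"
  unfolding admissible_def sing_coloring_def
proof (intro conjI ballI impI)
  show "s \<in> V" by (rule s_V)
  fix v assume "v \<in> V - {s}"
  then show "kempe_swap c j j' y v \<in> classes"
    using sing_coloring_classes[OF admissible_sing_coloring[OF adm]] p j
    unfolding classes_def kempe_swap_def by auto
next
  fix v assume "v \<in> block - {s}"
  then show "fst (kempe_swap c j j' y v) = p" using adm unfolding admissible_def kempe_swap_def by auto
next
  fix v assume v: "v \<in> V - block"
  then have "v \<notin> kempe_comp c j j' y"
    using kempe_comp_class[of v c j j' y] y admissible_block_iff[OF adm] by auto
  then show "kempe_swap c j j' y v = c0 v" using adm v unfolding admissible_def kempe_swap_def by auto
qed (rule kempe_swap_proper[OF adm y])

text \<open>If the \<open>(j, j')\<close>-chain of the class-\<open>j\<close> neighbour \<open>y\<close> of \<open>s\<close> missed its class-\<open>j'\<close>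
  neighbour \<open>y'\<close>, swapping it would leave \<open>s\<close> without a neighbour of class \<open>j\<close>.\<close>
lemma kempe_comp_links_sing_nbrs:
  assumes adm: "admissible c" and j: "j \<in> {1..r p}" "j' \<in> {1..r p}" "j \<noteq> j'"
    and y: "sing_nbr c j y" and y': "sing_nbr c j' y'"
  shows "y' \<in> kempe_comp c j j' y"
proof (rule ccontr)
  let ?K = "kempe_comp c j j' y" and ?c = "kempe_swap c j j' y"
  assume y'K: "y' \<notin> ?K"
  have "admissible ?c" using admissible_kempe_swap[OF adm j(1,2)] y unfolding sing_nbr_def by simp
  moreover have "(p, j) \<in> classes" using p j unfolding classes_def by auto
  ultimately obtain v where v: "v \<in> V - {s}" "E s v" "?c v = (p, j)"
    using sing_sees_every_class[OF admissible_sing_coloring] by blast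
  show False
  proof (cases "v \<in> ?K")
    case True
    then have "c v = (p, j')" using v(3) kempe_comp_class[of v c j j' y] True y j(3)
      unfolding kempe_swap_def sing_nbr_def by (auto split: if_splits)
    then have "v = y'" using sing_nbr_unique[OF adm _ y'] v unfolding sing_nbr_def by simp
    then show False using True y'K by simp
  next
    case False
    then have "c v = (p, j)" using v(3) unfolding kempe_swap_def by simp
    then have "v = y" using sing_nbr_unique[OF adm _ y] v unfolding sing_nbr_def by simp
    then show False using False kempe_comp_root by blast
  qed
qed

text \<open>Otherwise \<open>y\<close> could take class \<open>j'\<close>, again leaving \<open>s\<close> without a class-\<open>j\<close> neighbour.\<close>
lemma sing_nbr_sees_part:
  assumes adm: "admissible c" and y: "sing_nbr c j y" and j': "j' \<in> {1..r p}" "j' \<noteq> j"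
  shows "\<not> misses_class c y j'"
proof
  assume miss: "misses_class c y j'"
  have adm': "admissible (c(y := (p, j')))"
    by (rule admissible_recolour[OF adm sing_nbr_in_block[OF adm y] j'(1) miss])
  have "(p, j) \<in> classes"
    using p admissible_class_index[OF adm] y unfolding classes_def sing_nbr_def by auto
  then obtain v where v: "v \<in> V - {s}" "E s v" "(c(y := (p, j'))) v = (p, j)"
    using sing_sees_every_class[OF admissible_sing_coloring[OF adm']] by blast
  then have "v \<noteq> y" using j'(2) by auto
  then have "sing_nbr c j v" using v unfolding sing_nbr_def by auto
  then show False using sing_nbr_unique[OF adm _ y] \<open>v \<noteq> y\<close> by simp
qed

lemma sing_nbr_class_nbr_unique:
  assumes adm: "admissible c" and y: "sing_nbr c j y" and j': "j' \<in> {1..r p}" "j' \<noteq> j"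
    and w1: "w1 \<in> V - {s}" "E y w1" "c w1 = (p, j')"
    and w2: "w2 \<in> V - {s}" "E y w2" "c w2 = (p, j')"
  shows "w1 = w2"
proof (rule ccontr)
  assume "w1 \<noteq> w2"
  have j: "j \<in> {1..r p}" using admissible_class_index[OF adm] y unfolding sing_nbr_def by blast
  have "\<exists>j''\<in>{1..r p} - {j, j'}. misses_class c y j''"
  proof (rule block_comp_misses_class[OF adm])
    show "y \<in> block_comp" by (rule sing_nbr_in_block_comp[OF adm y])
    show "{j, j'} \<subseteq> {1..r p}" using j j' by auto
    show "{s, w1, w2} \<subseteq> {w\<in>block. E y w}"
      using w1 w2 admissible_in_block[OF adm] E_sym y by (auto simp: block_def sing_nbr_def)
    show "\<forall>w\<in>{s, w1, w2}. w = s \<or> snd (c w) \<in> {j, j'}" using w1 w2 by auto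
    show "card {j, j'} < card {s, w1, w2}"
      using \<open>w1 \<noteq> w2\<close> w1 w2 by (auto simp: card_insert_if)
  qed
  then show False using sing_nbr_sees_part[OF adm y] by auto
qed

end

context kempe_part
begin

definition kempe_path :: "('a \<Rightarrow> nat \<times> nat) \<Rightarrow> nat \<Rightarrow> nat \<Rightarrow> 'a list \<Rightarrow> 'a \<Rightarrow> 'a \<Rightarrow> bool" where
  "kempe_path c j j' P y y' \<longleftrightarrow> rel_path (kempe c j j') P \<and> P!0 = y \<and> last P = y'"

lemma kempe_path_exists:
  assumes adm: "admissible c" and j: "j \<in> {1..r p}" "j' \<in> {1..r p}" "j \<noteq> j'"
    and y: "sing_nbr c j y" and y': "sing_nbr c j' y'"
  obtains P where "kempe_path c j j' P y y'"
proof -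
  have "(kempe c j j')\<^sup>*\<^sup>* y y'"
    using kempe_comp_links_sing_nbrs[OF adm j y y'] unfolding kempe_comp_def by simp
  then show ?thesis using rtranclp_imp_rel_path that unfolding kempe_path_def by metis
qed

lemma kempe_pathD:
  assumes P: "kempe_path c j j' P y y'" and ne: "y \<noteq> y'"
  shows "distinct P" "2 \<le> length P" "P!(length P - 1) = y'"
    and "\<And>i. Suc i < length P \<Longrightarrow> kempe c j j' (P!i) (P!Suc i)"
proof -
  have "P \<noteq> []" "distinct P" using P unfolding kempe_path_def rel_path_def by auto
  then show "distinct P" "P!(length P - 1) = y'" using P by (auto simp: kempe_path_def last_conv_nth)
  show "2 \<le> length P"
  proof (rule ccontr)
    assume "\<not> 2 \<le> length P"
    moreover have "0 < length P" using \<open>P \<noteq> []\<close> by simp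
    ultimately have "length P = 1" by linarith
    then show False using P ne \<open>P \<noteq> []\<close> unfolding kempe_path_def by (auto simp: last_conv_nth)
  qed
  show "\<And>i. Suc i < length P \<Longrightarrow> kempe c j j' (P!i) (P!Suc i)"
    using P unfolding kempe_path_def rel_path_def by auto
qed

text \<open>Recolouring an interior vertex of the path with a third class it misses would cut the
  \<open>(j, j')\<close>-chain between \<open>y\<close> and \<open>y'\<close>, contradicting \<open>kempe_comp_links_sing_nbrs\<close>.\<close>
lemma kempe_path_interior_sees_part:
  assumes adm: "admissible c" and j: "j \<in> {1..r p}" "j' \<in> {1..r p}" "j \<noteq> j'"
    and y: "sing_nbr c j y" and y': "sing_nbr c j' y'" and P: "kempe_path c j j' P y y'"
    and l: "0 < l" "Suc l < length P" and pre: "\<forall>m<l. only_path_nbrs (kempe c j j') P m"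
    and j'': "j'' \<in> {1..r p}" "j'' \<noteq> j" "j'' \<noteq> j'"
  shows "\<not> misses_class c (P!l) j''"
proof
  assume miss: "misses_class c (P!l) j''"
  let ?u = "P!l" and ?c = "c(P!l := (p, j''))"
  have yy': "y \<noteq> y'" using y y' j(3) unfolding sing_nbr_def by auto
  note Pd = kempe_pathD[OF P yy']
  have "kempe c j j' ?u (P!Suc l)" using Pd(4) l(2) .
  then have "?u \<in> V - {s}" "fst (c ?u) = p" unfolding kempe_def by auto
  then have "?u \<in> block - {s}" using admissible_block_iff[OF adm] by auto
  then have adm': "admissible ?c" by (rule admissible_recolour[OF adm _ j''(1) miss])
  have "P!0 \<noteq> ?u" using Pd(1) l by (subst nth_eq_iff_index_eq) auto
  then have "y \<noteq> ?u" using P unfolding kempe_path_def by simp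
  moreover have "P!(length P - 1) \<noteq> ?u" using Pd(1) l by (subst nth_eq_iff_index_eq) auto
  then have "y' \<noteq> ?u" using Pd(3) by simp
  ultimately have "y' \<in> kempe_comp ?c j j' y"
    using kempe_comp_links_sing_nbrs[OF adm' j] y y' unfolding sing_nbr_def by simp
  then have "(kempe ?c j j')\<^sup>*\<^sup>* (P!0) y'" using P unfolding kempe_comp_def kempe_path_def by simp
  moreover have "kempe c j j' v w \<and> (l < length P \<longrightarrow> w \<noteq> P!l)" if "kempe ?c j j' v w" for v w
    using that j'' unfolding kempe_def by (auto split: if_splits)
  ultimately have "y' \<in> set (take l P)"
    using rtranclp_stays_in_path_prefix[of "kempe c j j'" P l "kempe ?c j j'"] P l pre
    unfolding kempe_path_def by auto
  then obtain i where i: "i < l" "P!i = y'" using l by (auto simp: in_set_conv_nth)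
  then have "P!i = P!(length P - 1)" using Pd(3) by simp
  then have "i = length P - 1" using Pd(1) i(1) l by (subst (asm) nth_eq_iff_index_eq) auto
  then show False using i(1) l by simp
qed

lemma sing_nbr_kempe_nbr_unique:
  assumes adm: "admissible c" and y: "sing_nbr c j y" and j': "j' \<in> {1..r p}" "j \<noteq> j'"
    and w1: "kempe c j j' y w1" and w2: "kempe c j j' y w2"
  shows "w1 = w2"
proof -
  have "c y = (p, j)" using y unfolding sing_nbr_def by simp
  then have "c w1 = (p, j')" "c w2 = (p, j')" using kempe_other_class[OF adm] w1 w2 j'(2) by auto
  then show ?thesis
    using sing_nbr_class_nbr_unique[OF adm y j'(1)] j'(2) w1 w2 unfolding kempe_def by auto
qed

lemma three_kempe_nbrs_misses_class:
  assumes adm: "admissible c" and j: "j \<in> {1..r p}" "j' \<in> {1..r p}" and u: "u \<in> block_comp"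
    and w: "kempe c j j' u w1" "kempe c j j' u w2" "kempe c j j' u w3"
    and distinct: "w1 \<noteq> w2" "w1 \<noteq> w3" "w2 \<noteq> w3"
  shows "\<exists>j''\<in>{1..r p} - {j, j'}. misses_class c u j''"
proof (rule block_comp_misses_class[OF adm u])
  have cls: "snd (c w) \<in> {j, j'}" "w \<in> block" "E u w" if "kempe c j j' u w" for w
    using that admissible_in_block[OF adm] unfolding kempe_def by auto
  show "{j, j'} \<subseteq> {1..r p}" using j by auto
  show "{w1, w2, w3} \<subseteq> {w\<in>block. E u w}" using cls w by auto
  show "\<forall>w\<in>{w1, w2, w3}. w = s \<or> snd (c w) \<in> {j, j'}" using cls w by auto
  have "card {j, j'} \<le> 2" by (simp add: card_insert_le_m1)
  then show "card {j, j'} < card {w1, w2, w3}" using distinct by simp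
qed

text \<open>Take the first position with an extra Kempe neighbour: at an end this contradicts
  \<open>sing_nbr_kempe_nbr_unique\<close>; in the interior the vertex has three Kempe neighbours, hence
  misses a class, contradicting \<open>kempe_path_interior_sees_part\<close>.\<close>
lemma kempe_path_only_path_nbrs:
  assumes adm: "admissible c" and j: "j \<in> {1..r p}" "j' \<in> {1..r p}" "j \<noteq> j'"
    and y: "sing_nbr c j y" and y': "sing_nbr c j' y'" and P: "kempe_path c j j' P y y'"
  shows "\<forall>l<length P. only_path_nbrs (kempe c j j') P l"
proof (rule ccontr)
  let ?R = "kempe c j j'"
  assume "\<not> ?thesis"
  then obtain l where l: "l < length P" "\<not> only_path_nbrs ?R P l"
    and least: "\<forall>m<l. only_path_nbrs ?R P m"
    using exists_least_iff[of "\<lambda>l. l < length P \<and> \<not> only_path_nbrs ?R P l"] by force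
  obtain w where w: "?R (P!l) w" "\<not> (0 < l \<and> w = P!(l-1))" "\<not> (Suc l < length P \<and> w = P!Suc l)"
    using l(2) unfolding only_path_nbrs_def by blast
  have yy': "y \<noteq> y'" using y y' j(3) unfolding sing_nbr_def by auto
  note Pd = kempe_pathD[OF P yy']
  have y0: "P!0 = y" using P unfolding kempe_path_def by simp
  consider "l = 0" | "Suc l = length P" | "0 < l" "Suc l < length P" using l(1) by linarith
  then show False
  proof cases
    case 1
    then have "?R y w" "?R y (P!1)" "w \<noteq> P!1" using w Pd(2) Pd(4)[of 0] y0 by auto
    then show False using sing_nbr_kempe_nbr_unique[OF adm y j(2,3)] by blast
  next
    case 2
    then have "P!l = y'" using Pd(3) by (metis diff_Suc_1)
    then have "kempe c j' j y' w" "kempe c j' j y' (P!(l-1))" "w \<noteq> P!(l-1)"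
      using w Pd(4)[of "l - 1"] 2 Pd(2) kempe_sym kempe_comm by (auto simp: Suc_diff_Suc)
    then show False using sing_nbr_kempe_nbr_unique[OF adm y' j(1)] j(3) by blast
  next
    case 3
    let ?u = "P!l"
    have pred: "?R ?u (P!(l-1))" using Pd(4)[of "l-1"] 3 kempe_sym by auto
    have succ: "?R ?u (P!Suc l)" using Pd(4)[of l] 3 by auto
    have "P!(l-1) \<noteq> P!Suc l" using Pd(1) 3 by (simp add: nth_eq_iff_index_eq)
    moreover have "w \<noteq> P!(l-1)" "w \<noteq> P!Suc l" using w(2,3) 3 by auto
    moreover have u_comp: "?u \<in> block_comp"
      using rel_path_rtranclp[of ?R P l] P l(1) sing_nbr_in_block_comp[OF adm y]
        kempe_comp_block_comp[OF adm, of ?u j j' y]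
      unfolding kempe_path_def kempe_comp_def by auto
    ultimately obtain j'' where "j'' \<in> {1..r p} - {j, j'}" "misses_class c ?u j''"
      using three_kempe_nbrs_misses_class[OF adm j(1,2) _ pred succ w(1)] by blast
    then show False
      using kempe_path_interior_sees_part[OF adm j y y' P 3 least] by auto
  qed
qed

lemma kempe_comp_subset_path:
  assumes adm: "admissible c" and j: "j \<in> {1..r p}" "j' \<in> {1..r p}" "j \<noteq> j'"
    and y: "sing_nbr c j y" and y': "sing_nbr c j' y'" and P: "kempe_path c j j' P y y'"
  shows "kempe_comp c j j' y \<subseteq> set P"
proof
  fix v assume "v \<in> kempe_comp c j j' y"
  then have "(kempe c j j')\<^sup>*\<^sup>* (P!0) v" using P unfolding kempe_comp_def kempe_path_def by simp
  moreover have "0 < length P" using P unfolding kempe_path_def rel_path_def by auto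
  ultimately have "v \<in> set (take (length P) P)"
    using rtranclp_stays_in_path_prefix[of "kempe c j j'" P "length P" "kempe c j j'"]
      kempe_path_only_path_nbrs[OF adm j y y' P] P unfolding kempe_path_def by auto
  then show "v \<in> set P" by simp
qed

end

context kempe_part
begin

lemma kempe_comp_interior:
  assumes adm: "admissible c" and j: "j \<in> {1..r p}" "j' \<in> {1..r p}" "j \<noteq> j'"
    and y: "sing_nbr c j y" and y': "sing_nbr c j' y'"
    and u: "u \<in> kempe_comp c j j' y" "u \<noteq> y" "c u = (p, j)"
  obtains P l where "kempe_path c j j' P y y'" "0 < l" "Suc l < length P" "P!l = u"
    "\<forall>m<l. only_path_nbrs (kempe c j j') P m"
    "kempe c j j' u (P!(l-1))" "kempe c j j' u (P!Suc l)" "P!(l-1) \<noteq> P!Suc l"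
proof -
  obtain P where P: "kempe_path c j j' P y y'" by (rule kempe_path_exists[OF adm j y y'])
  have yy': "y \<noteq> y'" using y y' j(3) unfolding sing_nbr_def by auto
  note Pd = kempe_pathD[OF P yy']
  have "u \<in> set P" using kempe_comp_subset_path[OF adm j y y' P] u(1) by auto
  then obtain l where l: "l < length P" "P!l = u" by (auto simp: in_set_conv_nth)
  have "0 < l" using l u(2) P unfolding kempe_path_def by (cases l) auto
  moreover have "Suc l < length P"
  proof (rule ccontr)
    assume "\<not> Suc l < length P"
    then have "u = y'" using l Pd(3) by (metis Suc_lessI diff_Suc_1)
    then show False using u(3) y' j(3) unfolding sing_nbr_def by auto
  qed
  moreover have "kempe c j j' u (P!(l-1))"
    using Pd(4)[of "l-1"] l \<open>0 < l\<close> kempe_sym by auto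
  moreover have "kempe c j j' u (P!Suc l)" using Pd(4)[of l] l \<open>Suc l < length P\<close> by auto
  moreover have "P!(l-1) \<noteq> P!Suc l"
    using Pd(1) \<open>Suc l < length P\<close> by (subst nth_eq_iff_index_eq) auto
  moreover have "\<forall>m<l. only_path_nbrs (kempe c j j') P m"
    using kempe_path_only_path_nbrs[OF adm j y y' P] l by auto
  ultimately show ?thesis using that P l by blast
qed

text \<open>Two chains from \<open>y\<close> through different other classes share only \<open>y\<close>: a common vertex
  would have two neighbours in each of the two other classes, so it misses a fourth class.\<close>
lemma kempe_comps_meet_only_at_root:
  assumes adm: "admissible c" and j: "j \<in> {1..r p}" "j1 \<in> {1..r p}" "j2 \<in> {1..r p}"
    and jd: "j \<noteq> j1" "j \<noteq> j2" "j1 \<noteq> j2"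
    and y: "sing_nbr c j y" and y1: "sing_nbr c j1 y1" and y2: "sing_nbr c j2 y2"
    and u: "u \<in> kempe_comp c j j1 y" "u \<in> kempe_comp c j j2 y"
  shows "u = y"
proof (rule ccontr)
  assume uy: "u \<noteq> y"
  have "c u \<in> {(p, j), (p, j1)}" "c u \<in> {(p, j), (p, j2)}"
    using kempe_comp_class[of u c j _ y] u y unfolding sing_nbr_def by auto
  then have cu: "c u = (p, j)" using jd(3) by auto
  obtain P1 l1 where P1: "kempe_path c j j1 P1 y y1" "0 < l1" "Suc l1 < length P1" "P1!l1 = u"
    "\<forall>m<l1. only_path_nbrs (kempe c j j1) P1 m"
    "kempe c j j1 u (P1!(l1-1))" "kempe c j j1 u (P1!Suc l1)" "P1!(l1-1) \<noteq> P1!Suc l1"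
    by (rule kempe_comp_interior[OF adm j(1,2) jd(1) y y1 u(1) uy cu])
  obtain P2 l2 where P2: "kempe c j j2 u (P2!(l2-1))" "kempe c j j2 u (P2!Suc l2)"
    "P2!(l2-1) \<noteq> P2!Suc l2"
    by (rule kempe_comp_interior[OF adm j(1,3) jd(2) y y2 u(2) uy cu])
  let ?A = "{P1!(l1-1), P1!Suc l1, P2!(l2-1), P2!Suc l2}"
  have cls1: "c w = (p, j1)" "w \<in> block" "E u w" if "kempe c j j1 u w" for w
    using kempe_other_class[OF adm that cu jd(1)] that admissible_in_block[OF adm] unfolding kempe_def by auto
  have cls2: "c w = (p, j2)" "w \<in> block" "E u w" if "kempe c j j2 u w" for w
    using kempe_other_class[OF adm that cu jd(2)] that admissible_in_block[OF adm] unfolding kempe_def by auto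
  have "\<exists>j3\<in>{1..r p} - {j, j1, j2}. misses_class c u j3"
  proof (rule block_comp_misses_class[OF adm])
    show "u \<in> block_comp"
      using kempe_comp_block_comp[OF adm u(1) sing_nbr_in_block_comp[OF adm y]] .
    show "{j, j1, j2} \<subseteq> {1..r p}" using j by auto
    show "?A \<subseteq> {w\<in>block. E u w}" using cls1 cls2 P1(6,7) P2(1,2) by auto
    show "\<forall>w\<in>?A. w = s \<or> snd (c w) \<in> {j, j1, j2}" using cls1 cls2 P1(6,7) P2(1,2) by auto
    have "P1!(l1-1) \<noteq> P2!(l2-1)" "P1!(l1-1) \<noteq> P2!Suc l2" "P1!Suc l1 \<noteq> P2!(l2-1)" "P1!Suc l1 \<noteq> P2!Suc l2"
      using cls1(1)[OF P1(6)] cls1(1)[OF P1(7)] cls2(1)[OF P2(1)] cls2(1)[OF P2(2)] jd(3) by auto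
    then have "card ?A = 4" using P1(8) P2(3) by (simp add: card_insert_if)
    moreover have "card {j, j1, j2} \<le> 3" by (simp add: card_insert_le_m1)
    ultimately show "card {j, j1, j2} < card ?A" by simp
  qed
  then show False
    using kempe_path_interior_sees_part[OF adm j(1,2) jd(1) y y1 P1(1-3,5)] P1(4) by auto
qed

text \<open>Swapping the \<open>(j1, j3)\<close>-chain of \<open>y\<close> leaves the rest of the \<open>(j1, j2)\<close>-path from \<open>y\<close> to
  \<open>y'\<close> untouched, since the two chains meet only at \<open>y\<close>.\<close>
lemma kempe_swap_keeps_path_tail:
  assumes adm: "admissible c" and j: "j1 \<in> {1..r p}" "j2 \<in> {1..r p}" "j3 \<in> {1..r p}"
    and jd: "j1 \<noteq> j2" "j1 \<noteq> j3" "j2 \<noteq> j3"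
    and y: "sing_nbr c j1 y" and y': "sing_nbr c j2 y'" and y3: "sing_nbr c j3 y3"
    and P: "kempe_path c j1 j2 P y y'"
  shows "(kempe (kempe_swap c j1 j3 y) j1 j2)\<^sup>*\<^sup>* (P!1) y'"
proof -
  let ?c = "kempe_swap c j1 j3 y"
  have yy': "y \<noteq> y'" using y y' jd(1) unfolding sing_nbr_def by auto
  note Pd = kempe_pathD[OF P yy']
  have unchanged: "?c (P!i) = c (P!i)" if "0 < i" "i < length P" for i
  proof -
    have "(kempe c j1 j2)\<^sup>*\<^sup>* (P!0) (P!i)"
      using rel_path_rtranclp[of "kempe c j1 j2" P i] P that unfolding kempe_path_def by auto
    then have "P!i \<in> kempe_comp c j1 j2 y" using P unfolding kempe_comp_def kempe_path_def by simp
    moreover have "P!0 \<noteq> P!i" using Pd(1) that by (subst nth_eq_iff_index_eq) auto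
    then have "P!i \<noteq> y" using P unfolding kempe_path_def by simp
    ultimately have "P!i \<notin> kempe_comp c j1 j3 y"
      using kempe_comps_meet_only_at_root[OF adm j(1,2,3) jd y y' y3] by blast
    then show ?thesis unfolding kempe_swap_def by simp
  qed
  have "kempe ?c j1 j2 (P!i) (P!Suc i)" if "0 < i" "Suc i < length P" for i
    using Pd(4)[OF that(2)] unchanged[of i] unchanged[of "Suc i"] that unfolding kempe_def by auto
  then have reach: "(kempe ?c j1 j2)\<^sup>*\<^sup>* (P!1) (P!(1 + k))" if "1 + k < length P" for k
    using that by (induction k) (auto intro: rtranclp.rtrancl_into_rtrancl)
  have "1 + (length P - 2) < length P" "1 + (length P - 2) = length P - 1" using Pd(2) by auto
  then show ?thesis using reach[of "length P - 2"] Pd(3) by simp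
qed

lemma part_nbr_sing_nbr:
  assumes adm: "admissible c" and y: "y \<in> V - {s}" "E s y" "fst (c y) = p"
  obtains j where "sing_nbr c j y" "j \<in> {1..r p}"
proof -
  have "c y = (p, snd (c y))" "snd (c y) \<in> {1..r p}"
    using classesD[OF sing_coloring_classes[OF admissible_sing_coloring[OF adm] y(1)] y(3)] by auto
  then show ?thesis using that y unfolding sing_nbr_def by metis
qed

lemma third_class:
  obtains j3 where "j3 \<in> {1..r p}" "j3 \<noteq> j1" "j3 \<noteq> j2"
proof -
  have "\<not> {1..r p} \<subseteq> {j1, j2}"
  proof
    assume "{1..r p} \<subseteq> {j1, j2}"
    then have "card {1..r p} \<le> card {j1, j2}" by (intro card_mono) auto
    moreover have "card {j1, j2} \<le> 2" by (simp add: card_insert_le_m1)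
    ultimately show False using r_p_ge_3 by simp
  qed
  then show ?thesis using that by blast
qed

lemma kempe_swap_other_class:
  assumes y: "y \<in> V - {s}" "c y \<in> {(p, j), (p, j')}" and v: "c v \<notin> {(p, j), (p, j')}"
  shows "kempe_swap c j j' y v = c v"
  using kempe_comp_class[of v c j j' y] y v unfolding kempe_swap_def by auto

text \<open>Nonadjacent \<open>y, y'\<close> would give, after swapping the \<open>(j1, j3)\<close>-chain of \<open>y\<close>, a vertex
  \<open>t\<close> (the successor of \<open>y\<close> on the old \<open>(j1, j2)\<close>-path) lying on the \<open>(j2, j1)\<close>- and the
  \<open>(j2, j3)\<close>-chain of \<open>y'\<close> but different from \<open>y'\<close>.\<close>
lemma sing_nbrs_in_part_adjacent:
  assumes y: "y \<in> V - {s}" "E s y" "fst (c0 y) = p"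
    and y': "y' \<in> V - {s}" "E s y'" "fst (c0 y') = p" and yy': "y \<noteq> y'"
  shows "E y y'"
proof (rule ccontr)
  assume nE: "\<not> E y y'"
  note adm0 = admissible_c0
  obtain j1 where j1: "sing_nbr c0 j1 y" "j1 \<in> {1..r p}" by (rule part_nbr_sing_nbr[OF adm0 y])
  obtain j2 where j2: "sing_nbr c0 j2 y'" "j2 \<in> {1..r p}" by (rule part_nbr_sing_nbr[OF adm0 y'])
  have j12: "j1 \<noteq> j2" using sing_nbr_unique[OF adm0 j1(1)] j2(1) yy' by auto
  obtain j3 where j3: "j3 \<in> {1..r p}" "j3 \<noteq> j1" "j3 \<noteq> j2" by (rule third_class)
  obtain y3 where y3: "sing_nbr c0 j3 y3"
    using admissible_sees_part_once[OF adm0] j3(1) unfolding sees_part_once_def sing_nbr_def by blast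
  obtain P where P: "kempe_path c0 j1 j2 P y y'" by (rule kempe_path_exists[OF adm0 j1(2) j2(2) j12 j1(1) j2(1)])
  let ?c = "kempe_swap c0 j1 j3 y" and ?t = "P!1"
  have y_cls: "y \<in> V - {s}" "c0 y \<in> {(p, j1), (p, j3)}" using j1(1) unfolding sing_nbr_def by auto
  have adm: "admissible ?c" by (rule admissible_kempe_swap[OF adm0 j1(2) j3(1) y_cls])
  have cy: "sing_nbr ?c j3 y" using j1(1) kempe_comp_root[of y c0 j1 j3] unfolding sing_nbr_def kempe_swap_def by simp
  have "y3 \<in> kempe_comp c0 j1 j3 y"
    by (rule kempe_comp_links_sing_nbrs[OF adm0 j1(2) j3(1) j3(2)[symmetric] j1(1) y3])
  then have cy3: "sing_nbr ?c j1 y3" using y3 j3(2) unfolding sing_nbr_def kempe_swap_def by simp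
  have cy': "sing_nbr ?c j2 y'"
    using j2(1) kempe_swap_other_class[of y c0 j1 j3 y'] y_cls j12 j3(3) unfolding sing_nbr_def by auto
  have kt: "kempe c0 j1 j2 y ?t" using kempe_pathD(2)[OF P yy'] kempe_pathD(4)[OF P yy', of 0] P unfolding kempe_path_def by simp
  then have t: "?t \<in> V - {s}" "E y ?t" unfolding kempe_def by auto
  have "c0 ?t = (p, j2)" using kempe_other_class[OF adm0 kt _ j12] j1(1) unfolding sing_nbr_def by simp
  then have ct: "?c ?t = (p, j2)" using kempe_swap_other_class[of y c0 j1 j3 ?t] y_cls j12 j3(3) by auto
  have "(kempe ?c j1 j2)\<^sup>*\<^sup>* ?t y'"
    by (rule kempe_swap_keeps_path_tail[OF adm0 j1(2) j2(2) j3(1) j12 j3(2)[symmetric]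
          j3(3)[symmetric] j1(1) j2(1) y3 P])
  moreover have "symp (kempe ?c j1 j2)" by (rule sympI) (rule kempe_sym)
  ultimately have "(kempe ?c j1 j2)\<^sup>*\<^sup>* y' ?t" by (blast intro: sympD[OF symp_rtranclp])
  then have t1: "?t \<in> kempe_comp ?c j2 j1 y'" unfolding kempe_comp_def kempe_comm[of ?c j2 j1] by simp
  have "y \<in> kempe_comp ?c j2 j3 y'"
    by (rule kempe_comp_links_sing_nbrs[OF adm j2(2) j3(1) j3(3)[symmetric] cy' cy])
  moreover have "kempe ?c j2 j3 y ?t" using t cy ct unfolding kempe_def sing_nbr_def by auto
  ultimately have t2: "?t \<in> kempe_comp ?c j2 j3 y'" by (rule kempe_comp_closed)
  have "?t = y'"
    by (rule kempe_comps_meet_only_at_root[OF adm j2(2) j1(2) j3(1) j12[symmetric] j3(3)[symmetric]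
          j3(2)[symmetric] cy' cy3 cy t1 t2])
  then show False using t(2) nE by simp
qed

end

context min_partition
begin

lemma optimal_part_nbrs_adjacent:
  assumes opt: "optimal s c" and p: "p \<in> {1..a}" and once: "sees_part_once s c p" and r3: "3 \<le> r p"
    and u: "u \<in> part_nbrs s c p" and v: "v \<in> part_nbrs s c p" and uv: "u \<noteq> v"
  shows "E u v"
proof -
  interpret kempe_part V E a r M s c p by unfold_locales (fact opt p once r3)+
  show ?thesis using sing_nbrs_in_part_adjacent u v uv unfolding part_nbrs_def by auto
qed

text \<open>Move the singleton from \<open>x\<close> to \<open>w\<close> and then, inside part \<open>j\<close>, on to \<open>z\<close>: there both
  \<open>w\<close> (now coloured like \<open>z\<close> was) and \<open>u\<close> are neighbours of the singleton in part \<open>j\<close>.\<close>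
lemma low_nbr_adjacent_to_part:
  assumes opt: "optimal x c" and x: "low V E x"
    and ij: "i \<in> {1..a}" "j \<in> {1..a}" "i \<noteq> j" and r3: "3 \<le> r j"
    and w: "w \<in> part_nbrs x c i" "low V E w" and z: "z \<in> part_nbrs x c j" and wz: "E w z"
    and u: "u \<in> part_nbrs x c j"
  shows "E w u"
proof (cases "u = z")
  case True
  then show ?thesis using wz by simp
next
  case False
  have st: "sing_coloring x c" using opt by (rule optimal_sing_coloring)
  let ?c1 = "c(x := c w)"
  have opt1: "optimal w ?c1"
    using optimal_swap[OF opt ij(1) low_sees_part_once[OF st x ij(1)] w(1)] by simp
  have once1: "sees_part_once w ?c1 j"
    by (rule low_sees_part_once[OF optimal_sing_coloring[OF opt1] w(2) ij(2)])
  have wV: "w \<in> V - {x}" "fst (c w) = i" using w(1) unfolding part_nbrs_def by auto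
  have zV: "z \<in> V - {x}" "fst (c z) = j" using z unfolding part_nbrs_def by auto
  have "z \<noteq> w" using wV zV ij(3) by auto
  then have z1: "z \<in> part_nbrs w ?c1 j" using zV wz unfolding part_nbrs_def by auto
  let ?c2 = "?c1(w := ?c1 z)"
  have opt2: "optimal z ?c2" and once2: "sees_part_once z ?c2 j"
    using optimal_swap[OF opt1 ij(2) once1 z1] by simp_all
  have "u \<noteq> w" using u wV ij(3) unfolding part_nbrs_def by auto
  moreover have "E z u"
    using optimal_part_nbrs_adjacent[OF opt ij(2) low_sees_part_once[OF st x ij(2)] r3 z u] False by simp
  ultimately have "u \<in> part_nbrs z ?c2 j" using u False unfolding part_nbrs_def by auto
  moreover have "w \<in> part_nbrs z ?c2 j" using wV zV \<open>z \<noteq> w\<close> E_sym[OF wz] unfolding part_nbrs_def by auto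
  ultimately show "E w u"
    using optimal_part_nbrs_adjacent[OF opt2 ij(2) once2 r3] \<open>u \<noteq> w\<close> by blast
qed

lemma low_nbr_adjacent_to_other_part:
  assumes opt: "optimal x c" and x: "low V E x"
    and ij: "i \<in> {1..a}" "j \<in> {1..a}" "i \<noteq> j" and r3: "3 \<le> r i" "3 \<le> r j"
    and w: "w \<in> part_nbrs x c i" "low V E w" and z: "z \<in> part_nbrs x c j" "low V E z" and wz: "E w z"
    and v: "v \<in> part_nbrs x c i" "low V E v" and u: "u \<in> part_nbrs x c j"
  shows "E v u"
proof -
  have "E z v"
    using low_nbr_adjacent_to_part[OF opt x ij(2,1) ij(3)[symmetric] r3(1) z w(1) E_sym[OF wz] v(1)] .
  then show ?thesis
    using low_nbr_adjacent_to_part[OF opt x ij r3(2) v z(1) E_sym u] by blast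
qed

lemma low_nbhd_two_parts_complete:
  assumes opt: "optimal x c" and x: "low V E x"
    and ij: "i \<in> {1..a}" "j \<in> {1..a}" "i \<noteq> j" and r3: "3 \<le> r i" "3 \<le> r j"
    and w: "w \<in> part_nbrs x c i" "low V E w" and z: "z \<in> part_nbrs x c j" "low V E z" and wz: "E w z"
    and v: "v \<in> part_nbrs x c i \<union> part_nbrs x c j" "low V E v"
    and u: "u \<in> part_nbrs x c i \<union> part_nbrs x c j" "u \<noteq> v"
  shows "E v u"
proof -
  have once: "sees_part_once x c q" if "q \<in> {1..a}" for q
    by (rule low_sees_part_once[OF optimal_sing_coloring[OF opt] x that])
  note within = optimal_part_nbrs_adjacent[OF opt _ once]
  note cross = low_nbr_adjacent_to_other_part[OF opt x]
  consider "v \<in> part_nbrs x c i" "u \<in> part_nbrs x c i" | "v \<in> part_nbrs x c i" "u \<in> part_nbrs x c j"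
    | "v \<in> part_nbrs x c j" "u \<in> part_nbrs x c i" | "v \<in> part_nbrs x c j" "u \<in> part_nbrs x c j"
    using u(1) v(1) by blast
  then show ?thesis
  proof cases
    case 1
    then show ?thesis using within[OF ij(1) ij(1) r3(1)] u(2) by blast
  next
    case 2
    then show ?thesis using cross[OF ij r3 w z wz _ v(2)] by blast
  next
    case 3
    then show ?thesis using cross[OF ij(2,1) ij(3)[symmetric] r3(2,1) z w E_sym[OF wz] _ v(2)] by blast
  next
    case 4
    then show ?thesis using within[OF ij(2) ij(2) r3(2)] u(2) by blast
  qed
qed

end

theorem lemma3p4:
  fixes V :: "'a set" and E :: "'a \<Rightarrow> 'a \<Rightarrow> bool"
    and a :: nat and r :: "nat \<Rightarrow> nat" and x :: 'a and L :: "nat \<Rightarrow> nat \<Rightarrow> 'a set"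
    and i j :: nat and w z :: 'a
  assumes G: "simple_graph V E"
    and crit: "\<exists>v. critical V E v"
    and a: "a \<ge> 1"
    and rpos: "\<forall>k\<in>{1..a}. r k > 0"
    and rsum: "1 + (\<Sum>k=1..a. r k) = chi V E"
    and pc: "partitioned_coloring V E a r x L"
    and minimal: "\<forall>x' L'. partitioned_coloring V E a r x' L' \<longrightarrow> pc_cost E a r L \<le> pc_cost E a r L'"
    and xlow: "low V E x"
    and ij: "i \<in> {1..a}" "j \<in> {1..a}" "i \<noteq> j"
    and rij: "r i \<ge> r j" "r j \<ge> 3"
    and w: "w \<in> partU r L i \<inter> nbhd V E x" "low V E w"
    and z: "z \<in> partU r L j \<inter> nbhd V E x" "low V E z"
    and wz: "E w z"
  shows "\<forall>v\<in>(partU r L i \<union> partU r L j) \<inter> nbhd V E x. low V E v \<longrightarrow>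
           (\<forall>u\<in>(partU r L i \<union> partU r L j) \<inter> nbhd V E x. u \<noteq> v \<longrightarrow> E v u)"
proof -
  interpret chi_partition V E a r by unfold_locales (fact G a rsum)+
  interpret min_partition V E a r "pc_cost E a r L"
  proof
    fix s c assume "sing_coloring s c"
    then show "pc_cost E a r L \<le> cost s c"
      using minimal partitioned_coloring_class_sets pc_cost_class_sets by metis
  qed
  let ?N = "part_nbrs x (class_of L)"
  have opt: "optimal x (class_of L)"
    using sing_coloring_class_of[OF pc] pc_cost_eq_cost[OF pc] unfolding optimal_def by simp
  have N: "partU r L q \<inter> nbhd V E x = ?N q" if "q \<in> {1..a}" for q
    unfolding partU_eq_part[OF pc that] using E_V unfolding part_def part_nbrs_def nbhd_def by blast
  have "(partU r L i \<union> partU r L j) \<inter> nbhd V E x = ?N i \<union> ?N j"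
    using N[OF ij(1)] N[OF ij(2)] by (simp add: Int_Un_distrib2)
  moreover have "w \<in> ?N i" "z \<in> ?N j" using w(1) z(1) N ij by auto
  ultimately show ?thesis
    using low_nbhd_two_parts_complete[OF opt xlow ij _ rij(2) _ w(2) _ z(2) wz] rij by auto
qed

end
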